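(* Let $m\in A^+$ be irreducible of degree $d$, let $f(u)\in\mathbb{F}_p[u]$ be monic irreducible with a root $\alpha$, and let $n_1,n_2\ge1$ be integers with $n_1\equiv n_2\pmod{q^d-1}$. Then $B_{n_1}^{\alpha}\equiv B_{n_2}^{\alpha}\pmod m$.
   Context: Let $q$ be a power of a prime $p$, $A=\mathbb{F}_q[T]$, and $A^+$ the set of monic polynomials in $A$. For integers $n\ge1$, $i\ge0$, set $s_i(n)=\sum_{a\in A^+,\ \deg a=i} a^n\in A$. Writing $n=\sum_j a_jq^j$ with $0\le a_j\le q-1$, let $l(n)=\sum_j a_j$; it is known that $s_i(n)=0$ whenever $i>l(n)/(q-1)$, so $C_n(u)=\sum_{i\ge0}s_i(n)u^i\in A[u]$. Define $B_n(u)=C_n(u)$ if $n\not\equiv 0\pmod{q-1}$, and $B_n(u)=C_n(u)/(1-u)=\sum_{i\ge0}\big(\sum_{j=0}^i s_j(n)\big)u^i$ if $n\equiv0\pmod{q-1}$ (this lies in $A[u]$ since $C_n(1)=0$ in that case). For $\alpha$ algebraic over $\mathbb{F}_p$, let $s=[\mathbb{F}_q(\alpha):\mathbb{F}_q]$ and let $\alpha_1,\dots,\alpha_s$ be the conjugates of $\alpha$ over $\mathbb{F}_q$; define $B_n^{\alpha}=N_{\mathbb{F}_{q^s}(T)/\mathbb{F}_q(T)}(B_n(\alpha))=\prod_{i=1}^s B_n(\alpha_i)\in A$. *)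

theory Defs
  imports "HOL-Algebra.Algebraic_Closure_Type"
begin

text \<open>The finite field F_q is a type 'a (finite field), q = card (UNIV :: 'a set);
 A = F_q[T] is 'a poly. Polynomials in u over A are 'a poly poly.
 An algebraic closure of F_q is 'a alg_closure, with embedding to_ac.\<close>

definition monic_poly :: "'a::field poly \<Rightarrow> bool" where
  "monic_poly a \<longleftrightarrow> lead_coeff a = 1"

definition s_sum :: "nat \<Rightarrow> nat \<Rightarrow> ('a::{finite,field}) poly" where
  "s_sum i n = (\<Sum>a\<in>{a :: 'a poly. monic_poly a \<and> degree a = i}. a ^ n)"

text \<open>C_n(u) = sum_i s_i(n) u^i; all terms with i > n vanish since l(n) <= n and q-1 >= 1
 (s_i(n) = 0 for i > l(n)/(q-1)).\<close>
definition C_poly :: "nat \<Rightarrow> ('a::{finite,field}) poly poly" where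
  "C_poly n = (\<Sum>i\<le>n. monom (s_sum i n :: 'a poly) i)"

text \<open>B_n(u) = C_n(u) if q-1 does not divide n; otherwise C_n(u)/(1-u) =
  sum_i (sum_{j<=i} s_j(n)) u^i.\<close>
definition B_poly :: "nat \<Rightarrow> ('a::{finite,field}) poly poly" where
  "B_poly n = (if \<not> (card (UNIV :: 'a set) - 1) dvd n then C_poly n
               else (\<Sum>i\<le>n. monom (\<Sum>j\<le>i. s_sum j n :: 'a poly) i))"

definition B_eval :: "nat \<Rightarrow> ('a::{finite,field}) alg_closure \<Rightarrow> 'a alg_closure poly" where
  "B_eval n \<beta> = poly (map_poly (map_poly to_ac) (B_poly n :: 'a poly poly)) [:\<beta>:]"

definition min_poly_Fq :: "('a::{finite,field}) alg_closure \<Rightarrow> 'a poly" where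
  "min_poly_Fq \<alpha> = (THE g. monic_poly g \<and> poly (map_poly to_ac g) \<alpha> = 0 \<and>
      (\<forall>h. h \<noteq> 0 \<longrightarrow> poly (map_poly to_ac h) \<alpha> = 0 \<longrightarrow> degree g \<le> degree h))"

definition conjugates_Fq :: "('a::{finite,field}) alg_closure \<Rightarrow> 'a alg_closure set" where
  "conjugates_Fq \<alpha> = {\<beta>. poly (map_poly to_ac (min_poly_Fq \<alpha>)) \<beta> = 0}"

definition B_norm :: "nat \<Rightarrow> ('a::{finite,field}) alg_closure \<Rightarrow> 'a poly" where
  "B_norm n \<alpha> = (THE b. map_poly to_ac b = (\<Prod>\<beta>\<in>conjugates_Fq \<alpha>. B_eval n \<beta>))"

text \<open>The prime field F_p inside F_q, and F_p[u] as polynomials with coefficients in it.\<close>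
definition prime_subfield :: "'a::field set" where
  "prime_subfield = range of_nat"

definition in_Fp_poly :: "'a::field poly \<Rightarrow> bool" where
  "in_Fp_poly f \<longleftrightarrow> (\<forall>i. coeff f i \<in> prime_subfield)"

definition irreducible_Fp :: "'a::field poly \<Rightarrow> bool" where
  "irreducible_Fp f \<longleftrightarrow> in_Fp_poly f \<and> degree f \<ge> 1 \<and>
     (\<forall>g h. in_Fp_poly g \<longrightarrow> in_Fp_poly h \<longrightarrow> f = g * h \<longrightarrow> degree g = 0 \<or> degree h = 0)"

end

theory Submission
  imports Defs "HOL-Library.Cardinality" "HOL-Number_Theory.Number_Theory" "HOL-Algebra.Sylow"
begin

text \<open>Since \<open>A/m\<close> is a field with \<open>q\<^sup>d\<close> elements, \<open>a\<^sup>n mod m\<close> depends only on \<open>n mod (q\<^sup>d - 1)\<close>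
  for \<open>n \<ge> 1\<close>; hence every power sum \<open>s\<^sub>i(n)\<close>, and with it every coefficient of \<open>B\<^sub>n\<close>, is the
  same modulo \<open>m\<close> for \<open>n\<^sub>1\<close> and \<open>n\<^sub>2\<close>. (When \<open>q - 1 | n\<close>, the coefficients of \<open>C\<^sub>n/(1 - u)\<close> are
  the partial sums of the \<open>s\<^sub>j(n)\<close>, which vanish from degree \<open>n\<close> on because power sums over all
  polynomials of degree \<open>< i\<close> vanish for exponents \<open>< i\<close>.) Evaluating at the conjugates of \<open>\<alpha>\<close> and
  multiplying preserves the congruence in the algebraic closure; the norm lies in \<open>A\<close> because
  the Frobenius \<open>x \<mapsto> x\<^sup>q\<close> permutes the conjugates, and divisibility by \<open>m\<close> descends to \<open>A\<close>.\<close>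

section \<open>Finite fields\<close>

lemma of_nat_card_UNIV_eq_0: "of_nat CARD('a) = (0 :: 'a::{finite,field} poly)"
  by (simp add: of_nat_poly of_nat_eq_0_iff_char_dvd CHAR_dvd_CARD)

lemma power_card_UNIV_minus_1_eq_1:
  fixes x :: "'a::{finite,field}"
  assumes "x \<noteq> 0"
  shows "x ^ (CARD('a) - 1) = 1"
proof -
  have "(\<Prod>y\<in>UNIV-{0}. x * y) = x ^ (CARD('a) - 1) * \<Prod>(UNIV-{0})"
    by (simp add: prod.distrib card_Diff_singleton)
  also have "(\<Prod>y\<in>UNIV-{0}. x * y) = \<Prod>(UNIV-{0})"
    by (rule prod.reindex_bij_witness[of _ "\<lambda>y. y / x" "\<lambda>y. x * y"]) (use assms in auto)
  finally have "1 * \<Prod>(UNIV-{0::'a}) = x ^ (CARD('a) - 1) * \<Prod>(UNIV-{0::'a})"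
    by simp
  moreover have "\<Prod>(UNIV-{0::'a}) \<noteq> 0"
    by (subst prod_zero_iff) auto
  ultimately show ?thesis
    by (metis mult_right_cancel)
qed

lemma power_card_UNIV_eq_self: "(x :: 'a::{finite,field}) ^ CARD('a) = x"
proof (cases "x = 0")
  case False
  have "CARD('a) = Suc (CARD('a) - 1)"
    using finite_UNIV_card_ge_0[where 'a='a] by simp
  then show ?thesis
    by (metis False power_Suc power_card_UNIV_minus_1_eq_1 mult_1_right)
qed (simp add: finite_UNIV_card_ge_0)

lemma power_eq_1_if_card_UNIV_minus_1_dvd:
  fixes x :: "'a::{finite,field}"
  assumes "x \<noteq> 0" and "(CARD('a) - 1) dvd n"
  shows "x ^ n = 1"
proof -
  obtain k where "n = (CARD('a) - 1) * k"
    using assms(2) by blast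
  then show ?thesis
    by (simp only: power_mult power_card_UNIV_minus_1_eq_1[OF assms(1)] power_one)
qed

lemma prime_CHAR_finite_field: "prime CHAR('a::{finite,field})"
  using finite_imp_CHAR_pos[where 'a='a] prime_CHAR_semidom by simp

text \<open>A prime \<open>r\<close> dividing the order of the additive group yields, by Sylow (Cauchy), a
  nonzero \<open>x\<close> with \<open>r \<cdot> x = 0\<close>; hence the characteristic divides \<open>r\<close>.\<close>
lemma prime_dvd_card_UNIV_imp_eq_CHAR:
  assumes r: "prime r" and dvd: "r dvd CARD('a)"
  shows "r = CHAR('a::{finite,field})"
proof -
  define G where "G = \<lparr>carrier = (UNIV :: 'a set), monoid.mult = (+), one = (0 :: 'a)\<rparr>"
  interpret group G
  proof (rule groupI)
    fix x assume "x \<in> carrier G"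
    show "\<exists>y\<in>carrier G. y \<otimes>\<^bsub>G\<^esub> x = \<one>\<^bsub>G\<^esub>"
      by (intro bexI[of _ "-x"]) (auto simp: G_def)
  qed (auto simp: G_def add_ac)
  obtain t where "CARD('a) = r ^ 1 * t"
    using dvd by auto
  then have "Coset.order G = r ^ 1 * t"
    by (simp add: Coset.order_def G_def)
  then obtain H where H: "subgroup H G" "card H = r"
    using sylow_thm[OF r is_group, of 1 t] by (auto simp: G_def)
  have "\<not> H \<subseteq> {0}"
    using card_mono[of "{0::'a}" H] H(2) prime_gt_1_nat[OF r] by auto
  then obtain x where x: "x \<in> H" "x \<noteq> 0"
    by blast
  interpret H: group "G\<lparr>carrier := H\<rparr>"
    using subgroup.subgroup_is_group[OF H(1) is_group] .
  have pow: "x [^]\<^bsub>G\<lparr>carrier := H\<rparr>\<^esub> n = of_nat n * x" for n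
    by (induction n) (simp_all add: G_def algebra_simps)
  have "x [^]\<^bsub>G\<lparr>carrier := H\<rparr>\<^esub> r = \<one>\<^bsub>G\<lparr>carrier := H\<rparr>\<^esub>"
    using H.pow_order_eq_1[of x] x(1) H(2) by (simp add: Coset.order_def)
  then have "of_nat r * x = 0"
    unfolding pow by (simp add: G_def)
  then have "of_nat r = (0 :: 'a)"
    using x(2) by simp
  then have "CHAR('a) dvd r"
    by (simp only: of_nat_eq_0_iff_char_dvd)
  then show ?thesis
    using r prime_CHAR_finite_field primes_dvd_imp_eq by blast
qed

lemma card_UNIV_eq_CHAR_power: "\<exists>k. CARD('a) = CHAR('a::{finite,field}) ^ k"
proof -
  define q where "q = CARD('a)"
  have "q \<noteq> 0"
    by (simp add: q_def finite_UNIV_card_ge_0)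
  have "prime_factors q \<subseteq> {CHAR('a)}"
    using prime_dvd_card_UNIV_imp_eq_CHAR unfolding q_def by (auto simp: prime_factors_dvd)
  then have "q = (\<Prod>p\<in>{CHAR('a)}. p ^ multiplicity p q)"
    using prod_prime_factors[OF \<open>q \<noteq> 0\<close>]
    by (subst (asm) prod.mono_neutral_left[of "{CHAR('a)}"])
       (auto simp: prime_factors_multiplicity prime_CHAR_finite_field)
  then show ?thesis
    unfolding q_def by auto
qed

section \<open>Power sums over polynomials of bounded degree\<close>

definition deg_less_polys :: "nat \<Rightarrow> 'a::zero poly set" where
  "deg_less_polys i = {b. \<forall>j\<ge>i. coeff b j = 0}"

lemma mem_deg_less_polys_iff: "b \<in> deg_less_polys i \<longleftrightarrow> b = 0 \<or> degree b < i"
proof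
  assume b: "b \<in> deg_less_polys i"
  show "b = 0 \<or> degree b < i"
  proof (cases "b = 0")
    case False
    then have "coeff b (degree b) \<noteq> 0"
      by simp
    with b have "\<not> i \<le> degree b"
      unfolding deg_less_polys_def by blast
    then show ?thesis
      by simp
  qed simp
qed (auto simp: deg_less_polys_def coeff_eq_0)

lemma deg_less_polys_0 [simp]: "deg_less_polys 0 = {0}"
  by (auto simp: deg_less_polys_def poly_eq_iff)

lemma deg_less_polys_Suc:
  "deg_less_polys (Suc i) = (\<lambda>(c, b). monom c i + b) ` (UNIV \<times> deg_less_polys i :: ('a::ab_group_add \<times> _) set)"
proof (intro equalityI subsetI)
  fix x :: "'a poly" assume "x \<in> deg_less_polys (Suc i)"
  then have "x - monom (coeff x i) i \<in> deg_less_polys i"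
    by (auto simp: deg_less_polys_def coeff_monom)
  then show "x \<in> (\<lambda>(c, b). monom c i + b) ` (UNIV \<times> deg_less_polys i)"
    by (intro image_eqI[of _ _ "(coeff x i, x - monom (coeff x i) i)"]) auto
qed (auto simp: deg_less_polys_def coeff_monom)

lemma inj_on_deg_less_polys_Suc:
  "inj_on (\<lambda>(c, b). monom c i + b) (UNIV \<times> deg_less_polys i :: ('a::ab_group_add \<times> _) set)"
proof (rule inj_onI, clarify)
  fix c c' :: 'a and b b' assume "b \<in> deg_less_polys i" "b' \<in> deg_less_polys i"
    and eq: "monom c i + b = monom c' i + b'"
  have "coeff (monom c i + b) i = coeff (monom c' i + b') i"
    using eq by simp
  then have "c = c'"
    using \<open>b \<in> deg_less_polys i\<close> \<open>b' \<in> deg_less_polys i\<close> by (simp add: deg_less_polys_def)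
  with eq show "c = c' \<and> b = b'"
    by simp
qed

lemma finite_deg_less_polys: "finite (deg_less_polys i :: ('a::{finite,ab_group_add}) poly set)"
  by (induction i) (simp_all add: deg_less_polys_Suc)

lemma card_deg_less_polys: "card (deg_less_polys i :: ('a::{finite,ab_group_add}) poly set) = CARD('a) ^ i"
proof (induction i)
  case (Suc i)
  then show ?case
    by (simp add: deg_less_polys_Suc card_image[OF inj_on_deg_less_polys_Suc] card_cartesian_product)
qed simp

lemma sum_deg_less_polys_Suc:
  "(\<Sum>b\<in>deg_less_polys (Suc i). g b) =
     (\<Sum>c\<in>UNIV. \<Sum>b\<in>deg_less_polys i. g (monom c i + (b :: ('a::{finite,ab_group_add}) poly)))"
proof -
  have "(\<Sum>b\<in>deg_less_polys (Suc i). g b) = (\<Sum>x\<in>UNIV \<times> deg_less_polys i. g ((\<lambda>(c, b). monom c i + b) x))"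
    unfolding deg_less_polys_Suc by (rule sum.reindex[OF inj_on_deg_less_polys_Suc, unfolded comp_def])
  then show ?thesis
    by (simp add: sum.cartesian_product split_def)
qed

text \<open>Expand binomially in the top coefficient \<open>c\<close>: the term free of \<open>c\<close> occurs \<open>q\<close> times,
  and every other term falls under the induction hypothesis.\<close>
lemma sum_power_deg_less_polys_eq_0:
  "k < i \<Longrightarrow> (\<Sum>b\<in>deg_less_polys i. (e + b) ^ k) = (0 :: ('a::{finite,field}) poly)"
proof (induction i arbitrary: e k)
  case (Suc i)
  have binomial: "(e + (monom c i + b)) ^ k =
      (\<Sum>l\<le>k. of_nat (k choose l) * monom c i ^ l * (e + b) ^ (k - l))" for c b
    by (metis add.left_commute binomial_ring)
  have "(\<Sum>b\<in>deg_less_polys (Suc i). (e + b) ^ k)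
      = (\<Sum>c\<in>UNIV. \<Sum>b\<in>deg_less_polys i. \<Sum>l\<le>k. of_nat (k choose l) * monom c i ^ l * (e + b) ^ (k - l))"
    by (simp only: sum_deg_less_polys_Suc binomial)
  also have "\<dots> = (\<Sum>l\<le>k. of_nat (k choose l) * (\<Sum>c\<in>UNIV. monom c i ^ l) * (\<Sum>b\<in>deg_less_polys i. (e + b) ^ (k - l)))"
    by (simp add: sum.swap[of _ "{..k}"] sum_distrib_left sum_distrib_right mult_ac)
  also have "\<dots> = 0"
  proof (intro sum.neutral ballI)
    fix l assume "l \<in> {..k}"
    then show "of_nat (k choose l) * (\<Sum>c\<in>UNIV. monom c i ^ l) * (\<Sum>b\<in>deg_less_polys i. (e + b) ^ (k - l)) = 0"
      using Suc by (cases "l = 0") (simp_all add: of_nat_card_UNIV_eq_0)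
  qed
  finally show ?case .
qed simp

lemma monic_deg_eq_image_deg_less_polys:
  "{a :: ('a::field) poly. monic_poly a \<and> degree a = i} = (\<lambda>b. monom 1 i + b) ` deg_less_polys i"
proof (intro equalityI subsetI)
  fix a :: "'a poly" assume "a \<in> {a. monic_poly a \<and> degree a = i}"
  then have "a - monom 1 i \<in> deg_less_polys i"
    by (auto simp: monic_poly_def deg_less_polys_def coeff_monom coeff_eq_0 le_eq_less_or_eq)
  then show "a \<in> (\<lambda>b. monom 1 i + b) ` deg_less_polys i"
    by (intro image_eqI[of _ _ "a - monom 1 i"]) auto
next
  fix a :: "'a poly" assume "a \<in> (\<lambda>b. monom 1 i + b) ` deg_less_polys i"
  then obtain b where b: "b \<in> deg_less_polys i" and a: "a = monom 1 i + b"
    by auto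
  then have "coeff a i = 1"
    by (simp add: deg_less_polys_def)
  moreover have "degree a = i"
  proof (rule antisym)
    show "degree a \<le> i"
      using b a by (intro degree_le) (auto simp: deg_less_polys_def coeff_monom)
    show "i \<le> degree a"
      using \<open>coeff a i = 1\<close> by (intro le_degree) simp
  qed
  ultimately show "a \<in> {a. monic_poly a \<and> degree a = i}"
    by (simp add: monic_poly_def)
qed

lemma s_sum_eq_sum_deg_less_polys:
  "s_sum i n = (\<Sum>b\<in>deg_less_polys i. (monom 1 i + b) ^ n :: ('a::{finite,field}) poly)"
  unfolding s_sum_def monic_deg_eq_image_deg_less_polys by (simp add: sum.reindex inj_on_def)

lemma s_sum_eq_0: "n < i \<Longrightarrow> s_sum i n = (0 :: ('a::{finite,field}) poly)"
  unfolding s_sum_eq_sum_deg_less_polys by (rule sum_power_deg_less_polys_eq_0)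

text \<open>Splitting off the top coefficient \<open>c\<close> and scaling \<open>b\<close> by \<open>c\<close>, each \<open>c \<noteq> 0\<close> contributes
  \<open>c\<^sup>n s\<^sub>i(n) = s\<^sub>i(n)\<close>, and there are \<open>q - 1 = -1\<close> of them.\<close>
lemma power_sum_deg_less_polys_Suc:
  assumes "(CARD('a) - 1) dvd n"
  shows "(\<Sum>b\<in>deg_less_polys (Suc i). b ^ n) =
           (\<Sum>b\<in>deg_less_polys i. b ^ n) - (s_sum i n :: ('a::{finite,field}) poly)"
proof -
  have top: "(\<Sum>b\<in>deg_less_polys i. (monom c i + b) ^ n) = s_sum i n" if "c \<noteq> 0" for c :: 'a
  proof -
    have "(\<Sum>b\<in>deg_less_polys i. (monom c i + b) ^ n)
        = (\<Sum>b\<in>deg_less_polys i. (monom c i + smult c b) ^ n)"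
      by (rule sum.reindex_bij_witness[of _ "smult c" "smult (inverse c)"])
         (use that in \<open>auto simp: deg_less_polys_def\<close>)
    also have "\<dots> = (\<Sum>b\<in>deg_less_polys i. (smult c (monom 1 i + b)) ^ n)"
      by (simp add: smult_add_right smult_monom)
    also have "\<dots> = (\<Sum>b\<in>deg_less_polys i. (monom 1 i + b) ^ n)"
      by (simp add: smult_power power_eq_1_if_card_UNIV_minus_1_dvd[OF that assms])
    finally show ?thesis
      by (simp add: s_sum_eq_sum_deg_less_polys)
  qed
  have "(\<Sum>b\<in>deg_less_polys (Suc i). b ^ n)
      = (\<Sum>c\<in>insert 0 (UNIV - {0}). \<Sum>b\<in>deg_less_polys i. (monom c i + b) ^ n :: 'a poly)"
    by (simp add: sum_deg_less_polys_Suc insert_UNIV)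
  also have "\<dots> = (\<Sum>b\<in>deg_less_polys i. b ^ n) +
      (\<Sum>c\<in>UNIV - {0}. \<Sum>b\<in>deg_less_polys i. (monom c i + b) ^ n)"
    by (subst sum.insert) auto
  also have "\<dots> = (\<Sum>b\<in>deg_less_polys i. b ^ n) + of_nat (CARD('a) - 1) * s_sum i n"
    by (simp add: top card_Diff_singleton)
  also have "of_nat (CARD('a) - 1) = (-1 :: 'a poly)"
    using finite_UNIV_card_ge_0[where 'a='a]
    by (simp add: of_nat_diff of_nat_card_UNIV_eq_0)
  finally show ?thesis
    by simp
qed

lemma sum_s_sum_eq_0:
  assumes "(CARD('a) - 1) dvd n" and "n \<ge> 1" and "n \<le> i"
  shows "(\<Sum>j\<le>i. s_sum j n) = (0 :: ('a::{finite,field}) poly)"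
proof -
  have "(\<Sum>b\<in>deg_less_polys k. b ^ n) = - (\<Sum>j<k. s_sum j n :: 'a poly)" for k
    using assms(2) by (induction k) (simp_all add: power_sum_deg_less_polys_Suc[OF assms(1)])
  moreover have "(\<Sum>b\<in>deg_less_polys (Suc i). b ^ n) = (0 :: 'a poly)"
    using sum_power_deg_less_polys_eq_0[of n "Suc i" 0] assms(3) by simp
  ultimately show ?thesis
    by (metis lessThan_Suc_atMost neg_equal_0_iff_equal)
qed

lemma coeff_B_poly:
  assumes "n \<ge> 1"
  shows "coeff (B_poly n) i =
    (if (CARD('a) - 1) dvd n then \<Sum>j\<le>i. s_sum j n else (s_sum i n :: ('a::{finite,field}) poly))"
  using assms by (auto simp: B_poly_def C_poly_def coeff_sum coeff_monom s_sum_eq_0 sum_s_sum_eq_0)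

section \<open>Congruences modulo an irreducible polynomial\<close>

text \<open>Multiplication by \<open>a\<close> permutes the \<open>q\<^sup>d - 1\<close> nonzero residues of degree \<open>< d\<close>.\<close>
lemma power_card_degree_minus_1_cong_1:
  fixes m a :: "'a::{finite,field} poly"
  assumes irr: "irreducible m" and a: "\<not> m dvd a"
  shows "[a ^ (CARD('a) ^ degree m - 1) = 1] (mod m)"
proof -
  have prime: "prime_elem m"
    using irr by (rule field_poly_irreducible_imp_prime)
  have "m \<noteq> 0"
    using irr by auto
  have dvd_mult_a: "m dvd a * b \<longleftrightarrow> m dvd b" for b
    using prime_elem_dvd_mult_iff[OF prime] a by blast
  define R where "R = deg_less_polys (degree m) - {0 :: 'a poly}"
  have "finite R"
    by (simp add: R_def finite_deg_less_polys)
  have card_R: "card R = CARD('a) ^ degree m - 1"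
    by (simp add: R_def card_deg_less_polys card_Diff_singleton mem_deg_less_polys_iff)
  have R_iff: "b \<in> R \<longleftrightarrow> b \<noteq> 0 \<and> degree b < degree m" for b
    by (auto simp: R_def mem_deg_less_polys_iff)
  have cong_R: "[x = y] (mod m) \<longleftrightarrow> x = y" if "x \<in> R" "y \<in> R" for x y
    using that by (simp add: cong_def R_iff mod_poly_less)
  have not_dvd_R: "\<not> m dvd b" if "b \<in> R" for b
    using that dvd_imp_degree_le[of m b] by (auto simp: R_iff)
  have maps_to: "a * b mod m \<in> R" if "b \<in> R" for b
  proof -
    have "a * b mod m \<noteq> 0"
      using not_dvd_R[OF that] by (simp add: mod_eq_0_iff_dvd dvd_mult_a)
    moreover from this have "degree (a * b mod m) < degree m"
      by (rule degree_mod_less'[OF \<open>m \<noteq> 0\<close>])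
    ultimately show ?thesis
      by (simp add: R_iff)
  qed
  have "inj_on (\<lambda>b. a * b mod m) R"
  proof (rule inj_onI)
    fix x y assume "x \<in> R" "y \<in> R" "a * x mod m = a * y mod m"
    then have "m dvd a * (x - y)"
      by (simp add: cong_def [symmetric] cong_iff_dvd_diff right_diff_distrib)
    then have "[x = y] (mod m)"
      by (simp add: dvd_mult_a cong_iff_dvd_diff)
    then show "x = y"
      using cong_R[OF \<open>x \<in> R\<close> \<open>y \<in> R\<close>] by blast
  qed
  then have permutes: "(\<lambda>b. a * b mod m) ` R = R"
    by (rule endo_inj_surj[OF \<open>finite R\<close>, rotated]) (use maps_to in blast)
  have "[(\<Prod>b\<in>R. a * b) = (\<Prod>b\<in>R. a * b mod m)] (mod m)"
    by (rule cong_prod) simp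
  also have "(\<Prod>b\<in>R. a * b mod m) = \<Prod>R"
    using prod.reindex[OF \<open>inj_on _ R\<close>, of id] permutes by simp
  finally have "m dvd (a ^ card R - 1) * \<Prod>R"
    by (simp add: prod.distrib cong_iff_dvd_diff left_diff_distrib)
  moreover have "\<not> m dvd \<Prod>R"
  proof
    assume "m dvd \<Prod>R"
    then obtain b where "b \<in># image_mset id (mset_set R)" "m dvd b"
      by (auto simp: prod_unfold_prod_mset elim: prime_elem_dvd_prod_msetE[OF prime])
    then show False
      using not_dvd_R \<open>finite R\<close> by auto
  qed
  ultimately show ?thesis
    using prime_elem_dvd_mult_iff[OF prime] card_R by (simp add: cong_iff_dvd_diff)
qed

lemma power_cong_if_exponent_cong:
  fixes m a :: "'a::{finite,field} poly"
  assumes "irreducible m" and "n1 \<ge> 1" and "n2 \<ge> 1"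
    and "[n1 = n2] (mod CARD('a) ^ degree m - 1)"
  shows "[a ^ n1 = a ^ n2] (mod m)"
proof (cases "m dvd a")
  case True
  have "[a ^ n = 0] (mod m)" if "n \<ge> 1" for n
    using True that by (cases n) (simp_all add: cong_0_iff)
  then have "[a ^ n1 = 0] (mod m)" and "[0 = a ^ n2] (mod m)"
    using assms(2,3) by (simp_all add: cong_sym)
  then show ?thesis
    by (rule cong_trans)
next
  case False
  define Q where "Q = CARD('a) ^ degree m - 1"
  have reduce: "[a ^ n = a ^ (n mod Q)] (mod m)" for n
  proof -
    have "[a ^ Q = 1] (mod m)"
      using power_card_degree_minus_1_cong_1[OF assms(1) False] by (simp add: Q_def)
    then have "[(a ^ Q) ^ (n div Q) * a ^ (n mod Q) = 1 ^ (n div Q) * a ^ (n mod Q)] (mod m)"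
      by (intro cong_mult cong_pow cong_refl)
    also have "(a ^ Q) ^ (n div Q) * a ^ (n mod Q) = a ^ n"
      by (simp flip: power_mult power_add)
    finally show ?thesis
      by simp
  qed
  have "[a ^ n1 = a ^ (n1 mod Q)] (mod m)"
    by (rule reduce)
  also have "n1 mod Q = n2 mod Q"
    using assms(4) by (simp add: Q_def cong_def)
  also have "[a ^ (n2 mod Q) = a ^ n2] (mod m)"
    by (rule cong_sym[OF reduce])
  finally show ?thesis .
qed

lemma diff_1_dvd_power_diff_1: "(q - 1) dvd (q ^ d - 1 :: nat)"
proof (cases q)
  case (Suc r)
  have "[Suc r = 1] (mod r)"
    using mod_Suc_eq[of r r] by (simp add: cong_def)
  then have "[Suc r ^ d = 1] (mod r)"
    using cong_pow[of "Suc r" 1 r d] by simp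
  then show ?thesis
    using Suc cong_to_1_nat by simp
qed (simp add: power_0_left)

lemma s_sum_cong:
  fixes m :: "'a::{finite,field} poly"
  assumes "irreducible m" and "n1 \<ge> 1" and "n2 \<ge> 1"
    and "[n1 = n2] (mod CARD('a) ^ degree m - 1)"
  shows "[s_sum i n1 = s_sum i n2] (mod m)"
  unfolding s_sum_def using power_cong_if_exponent_cong[OF assms] by (intro cong_sum)

lemma const_dvd_B_poly_diff:
  fixes m :: "'a::{finite,field} poly"
  assumes "irreducible m" and "n1 \<ge> 1" and "n2 \<ge> 1"
    and cong: "[n1 = n2] (mod CARD('a) ^ degree m - 1)"
  shows "[:m:] dvd B_poly n1 - B_poly n2"
proof -
  have "[n1 = n2] (mod CARD('a) - 1)"
    using cong diff_1_dvd_power_diff_1 by (rule cong_dvd_modulus_nat)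
  then have "(CARD('a) - 1) dvd n1 \<longleftrightarrow> (CARD('a) - 1) dvd n2"
    by (rule cong_dvd_iff)
  then have "[coeff (B_poly n1) i = coeff (B_poly n2) i] (mod m)" for i
    using s_sum_cong[OF assms] assms(2,3) by (simp add: coeff_B_poly cong_sum)
  then show ?thesis
    by (simp add: const_poly_dvd_iff cong_iff_dvd_diff)
qed

section \<open>Ring homomorphisms\<close>

locale comm_ring_hom =
  fixes hom :: "'a::comm_ring_1 \<Rightarrow> 'b::comm_ring_1"
  assumes hom_1: "hom 1 = 1"
    and hom_add: "hom (x + y) = hom x + hom y"
    and hom_mult: "hom (x * y) = hom x * hom y"
begin

lemma hom_0: "hom 0 = 0"
  using hom_add[of 0 0] by simp

lemma hom_uminus: "hom (- x) = - hom x"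
  using hom_add[of x "- x"] by (simp add: hom_0 eq_neg_iff_add_eq_0 add.commute)

lemma hom_diff: "hom (x - y) = hom x - hom y"
  using hom_add[of x "- y"] by (simp add: hom_uminus)

lemma hom_sum: "hom (\<Sum>i\<in>A. f i) = (\<Sum>i\<in>A. hom (f i))"
  by (induction A rule: infinite_finite_induct) (simp_all add: hom_0 hom_add)

lemma hom_prod: "hom (\<Prod>i\<in>A. f i) = (\<Prod>i\<in>A. hom (f i))"
  by (induction A rule: infinite_finite_induct) (simp_all add: hom_1 hom_mult)

lemma hom_dvd: "x dvd y \<Longrightarrow> hom x dvd hom y"
  by (auto simp: hom_mult elim!: dvdE)

lemma hom_poly: "hom (poly p x) = poly (map_poly hom p) (hom x)"
  by (induction p) (simp_all add: map_poly_pCons hom_0 hom_add hom_mult)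

lemma comm_ring_hom_map_poly: "comm_ring_hom (map_poly hom)"
proof
  show "map_poly hom 1 = 1"
    by (simp add: hom_1)
  show "map_poly hom (p + q) = map_poly hom p + map_poly hom q" for p q
    by (rule poly_eqI) (simp add: coeff_map_poly hom_0 hom_add)
  show "map_poly hom (p * q) = map_poly hom p * map_poly hom q" for p q
    by (rule poly_eqI) (simp add: coeff_map_poly coeff_mult hom_0 hom_sum hom_mult)
qed

end

lemma comm_ring_hom_comp: "comm_ring_hom f \<Longrightarrow> comm_ring_hom g \<Longrightarrow> comm_ring_hom (g \<circ> f)"
  by (simp add: comm_ring_hom_def)

lemma comm_ring_hom_poly: "comm_ring_hom (\<lambda>p. poly p x)"
  by unfold_locales simp_all

interpretation to_ac: comm_ring_hom to_ac
  by unfold_locales simp_all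

interpretation map_to_ac: comm_ring_hom "map_poly to_ac"
  by (rule to_ac.comm_ring_hom_map_poly)

definition eval_ac :: "'a::field poly poly \<Rightarrow> 'a alg_closure \<Rightarrow> 'a alg_closure poly" where
  "eval_ac P \<beta> = poly (map_poly (map_poly to_ac) P) [:\<beta>:]"

lemma comm_ring_hom_eval_ac: "comm_ring_hom (\<lambda>P. eval_ac P \<beta>)"
proof -
  have "(\<lambda>P. eval_ac P \<beta>) = (\<lambda>p. poly p [:\<beta>:]) \<circ> map_poly (map_poly to_ac)"
    by (simp add: eval_ac_def fun_eq_iff)
  then show ?thesis
    using comm_ring_hom_comp[OF map_to_ac.comm_ring_hom_map_poly comm_ring_hom_poly] by simp
qed

lemma B_eval_eq_eval_ac: "B_eval n \<beta> = eval_ac (B_poly n) \<beta>"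
  by (simp add: B_eval_def eval_ac_def)

lemma eval_ac_const [simp]: "eval_ac [:c:] \<beta> = map_poly to_ac c"
  by (simp add: eval_ac_def map_poly_pCons)

section \<open>The Frobenius of \<open>\<bbbF>\<^sub>q\<close> on the algebraic closure\<close>

definition frob :: "'a::{finite,field} alg_closure \<Rightarrow> 'a alg_closure" where
  "frob x = x ^ CARD('a)"

interpretation frob: comm_ring_hom "frob :: 'a::{finite,field} alg_closure \<Rightarrow> _"
proof
  obtain k where k: "CARD('a) = CHAR('a) ^ k"
    using card_UNIV_eq_CHAR_power by blast
  show "frob (x + y) = frob x + frob y" for x y :: "'a alg_closure"
    unfolding frob_def by (rule freshmans_dream') (simp_all add: k prime_CHAR_finite_field)
qed (simp_all add: frob_def power_mult_distrib)

interpretation map_frob: comm_ring_hom "map_poly (frob :: 'a::{finite,field} alg_closure \<Rightarrow> _)"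
  by (rule frob.comm_ring_hom_map_poly)

lemma frob_to_ac [simp]: "frob (to_ac c) = to_ac (c :: 'a::{finite,field})"
  by (simp add: frob_def power_card_UNIV_eq_self flip: to_ac_power)

lemma map_poly_frob_to_ac [simp]:
  "map_poly frob (map_poly to_ac p) = map_poly to_ac (p :: 'a::{finite,field} poly)"
  by (rule poly_eqI) (simp add: coeff_map_poly frob.hom_0)

lemma inj_frob: "inj (frob :: 'a::{finite,field} alg_closure \<Rightarrow> _)"
proof (rule injI)
  fix x y :: "'a alg_closure" assume "frob x = frob y"
  then have "frob (x - y) = 0"
    by (simp add: frob.hom_diff)
  then show "x = y"
    by (simp add: frob_def)
qed

text \<open>The \<open>q\<close> elements of \<open>\<bbbF>\<^sub>q\<close> already exhaust the at most \<open>q\<close> roots of \<open>X\<^sup>q - X\<close>.\<close>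
lemma frob_fixed_imp_in_range_to_ac:
  fixes x :: "'a::{finite,field} alg_closure"
  assumes "frob x = x"
  shows "x \<in> range to_ac"
proof -
  define p :: "'a alg_closure poly" where "p = monom 1 CARD('a) + [:0, -1:]"
  have "CARD('a) \<ge> 2"
    using card_mono[of "UNIV :: 'a set" "{0, 1}"] by simp
  then have degree_p: "degree p = CARD('a)"
    unfolding p_def by (subst degree_add_eq_left) (simp_all add: degree_monom_eq)
  then have "p \<noteq> 0"
    using \<open>CARD('a) \<ge> 2\<close> by auto
  have roots: "poly p y = 0 \<longleftrightarrow> frob y = y" for y
    by (simp add: p_def poly_monom frob_def)
  define Z where "Z = {y. poly p y = 0}"
  have "finite Z" and "card Z \<le> CARD('a)"
    using poly_roots_finite[OF \<open>p \<noteq> 0\<close>] card_poly_roots_bound[OF \<open>p \<noteq> 0\<close>] degree_p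
    by (simp_all add: Z_def)
  moreover have "range to_ac \<subseteq> Z"
    by (auto simp: Z_def roots)
  moreover have "card (range (to_ac :: 'a \<Rightarrow> _)) = CARD('a)"
    by (rule card_image[OF inj_to_ac])
  ultimately have "range to_ac = Z"
    by (metis card_seteq)
  then show ?thesis
    using assms by (simp add: Z_def roots)
qed

lemma frob_eval_ac: "map_poly frob (eval_ac P \<beta>) = eval_ac P (frob \<beta>)"
proof -
  have "map_poly (map_poly frob) (map_poly (map_poly to_ac) P) = map_poly (map_poly to_ac) P"
    by (simp add: map_poly_map_poly comp_def)
  then show ?thesis
    by (simp add: eval_ac_def map_frob.hom_poly map_poly_pCons frob.hom_0)
qed

section \<open>Norms\<close>

text \<open>The roots of a polynomial over \<open>\<bbbF>\<^sub>q\<close> are permuted by the Frobenius, so the product is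
  Frobenius-invariant and its coefficients lie in \<open>\<bbbF>\<^sub>q\<close>.\<close>
lemma prod_eval_ac_roots_in_range:
  fixes g :: "'a::{finite,field} poly"
  shows "\<exists>b. map_poly to_ac b = (\<Prod>\<beta>\<in>{\<beta>. poly (map_poly to_ac g) \<beta> = 0}. eval_ac P \<beta>)"
proof (cases "finite {\<beta>. poly (map_poly to_ac g) \<beta> = 0}")
  case True
  define S where "S = {\<beta>. poly (map_poly to_ac g) \<beta> = 0}"
  define N where "N = (\<Prod>\<beta>\<in>S. eval_ac P \<beta>)"
  have "poly (map_poly to_ac g) (frob \<beta>) = frob (poly (map_poly to_ac g) \<beta>)" for \<beta>
    using frob.hom_poly[of "map_poly to_ac g" \<beta>] by simp
  then have "frob ` S \<subseteq> S"
    by (auto simp: S_def frob.hom_0)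
  then have permutes: "frob ` S = S"
    using endo_inj_surj True inj_on_subset[OF inj_frob] unfolding S_def by blast
  have "map_poly frob N = (\<Prod>\<beta>\<in>S. eval_ac P (frob \<beta>))"
    by (simp add: N_def map_frob.hom_prod frob_eval_ac)
  also have "\<dots> = N"
    using prod.reindex[OF inj_on_subset[OF inj_frob], of S "\<lambda>\<beta>. eval_ac P \<beta>"] permutes
    by (simp add: N_def)
  finally have "frob (coeff N i) = coeff N i" for i
    by (metis coeff_map_poly frob.hom_0)
  then have "map_poly to_ac (map_poly of_ac N) = N"
    by (intro poly_eqI) (simp add: coeff_map_poly to_ac_of_ac frob_fixed_imp_in_range_to_ac)
  then show ?thesis
    unfolding N_def S_def by blast
qed (auto intro: exI[of _ 1])

lemma inj_map_poly_to_ac: "inj (map_poly (to_ac :: 'a::field \<Rightarrow> _))"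
  by (rule injI) (simp add: poly_eq_iff coeff_map_poly)

lemma map_poly_to_ac_B_norm:
  "map_poly to_ac (B_norm n \<alpha>) = (\<Prod>\<beta>\<in>conjugates_Fq \<alpha>. B_eval n \<beta>)"
proof -
  obtain b where b: "map_poly to_ac b = (\<Prod>\<beta>\<in>conjugates_Fq \<alpha>. B_eval n \<beta>)"
    using prod_eval_ac_roots_in_range[where g = "min_poly_Fq \<alpha>" and P = "B_poly n"]
    by (auto simp: conjugates_Fq_def B_eval_eq_eval_ac)
  then have "B_norm n \<alpha> = b"
    unfolding B_norm_def by (rule the_equality) (metis b inj_map_poly_to_ac injD)
  with b show ?thesis
    by simp
qed

lemma map_poly_to_ac_dvd_iff:
  fixes m x :: "'a::field poly"
  shows "map_poly to_ac m dvd map_poly to_ac x \<longleftrightarrow> m dvd x"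
proof
  assume dvd: "map_poly to_ac m dvd map_poly to_ac x"
  show "m dvd x"
  proof (cases "m = 0")
    case False
    have degree_map [simp]: "degree (map_poly to_ac p) = degree p" for p :: "'a poly"
      by (simp add: degree_map_poly)
    have "x mod m = x - m * (x div m)"
      by (simp add: minus_mult_div_eq_mod)
    then have "map_poly to_ac (x mod m) = map_poly to_ac x - map_poly to_ac m * map_poly to_ac (x div m)"
      by (simp add: map_to_ac.hom_diff map_to_ac.hom_mult)
    then have dvd_mod: "map_poly to_ac m dvd map_poly to_ac (x mod m)"
      using dvd by (simp add: dvd_diff)
    have "x mod m = 0"
    proof (rule ccontr)
      assume "x mod m \<noteq> 0"
      then have "degree (x mod m) < degree m"
        by (rule degree_mod_less'[OF False])
      moreover have "degree m \<le> degree (x mod m)"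
        using dvd_imp_degree_le[OF dvd_mod] \<open>x mod m \<noteq> 0\<close>
        by (simp add: map_poly_eq_0_iff)
      ultimately show False
        by simp
    qed
    then show ?thesis
      by (simp add: mod_eq_0_iff_dvd)
  qed (use dvd in \<open>simp add: map_poly_eq_0_iff\<close>)
qed (rule map_to_ac.hom_dvd)

text \<open>Only the irreducibility of \<open>m\<close> enters: the norm over the roots of any polynomial over \<open>\<bbbF>\<^sub>q\<close>
  is Frobenius-invariant.\<close>
theorem lemma5p1:
  fixes m :: "('a::{finite,field}) poly" and d :: nat
    and f :: "'a poly" and \<alpha> :: "'a alg_closure" and n1 n2 :: nat
  assumes "monic_poly m" and "Factorial_Ring.irreducible m" and "degree m = d"
    and "in_Fp_poly f" and "monic_poly f" and "irreducible_Fp f"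
    and "poly (map_poly to_ac f) \<alpha> = 0"
    and "n1 \<ge> 1" and "n2 \<ge> 1"
    and "n1 mod (card (UNIV :: 'a set) ^ d - 1) = n2 mod (card (UNIV :: 'a set) ^ d - 1)"
  shows "m dvd (B_norm n1 \<alpha> - B_norm n2 \<alpha>)"
proof -
  interpret eval: comm_ring_hom "\<lambda>P. eval_ac P \<beta>" for \<beta>
    by (rule comm_ring_hom_eval_ac)
  have "[:m:] dvd B_poly n1 - B_poly n2"
    using assms(2,3,8-10) by (intro const_dvd_B_poly_diff) (simp_all add: cong_def)
  then have "eval_ac [:m:] \<beta> dvd eval_ac (B_poly n1 - B_poly n2) \<beta>" for \<beta>
    by (rule eval.hom_dvd)
  then have "[B_eval n1 \<beta> = B_eval n2 \<beta>] (mod map_poly to_ac m)" for \<beta>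
    by (simp add: cong_iff_dvd_diff eval.hom_diff B_eval_eq_eval_ac)
  then have "[\<Prod>\<beta>\<in>conjugates_Fq \<alpha>. B_eval n1 \<beta> = \<Prod>\<beta>\<in>conjugates_Fq \<alpha>. B_eval n2 \<beta>] (mod map_poly to_ac m)"
    by (rule cong_prod)
  then have "map_poly to_ac m dvd map_poly to_ac (B_norm n1 \<alpha> - B_norm n2 \<alpha>)"
    by (simp add: cong_iff_dvd_diff map_poly_to_ac_B_norm map_to_ac.hom_diff)
  then show ?thesis
    by (simp add: map_poly_to_ac_dvd_iff)
qed

end
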